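(* Let $A$ be a VPA. The languages $S_0=\sigma_0(D)$ and $S_1=\sigma_1(W\setminus\{\varepsilon\})$ are context-free.
   Context: VPA $A=(Q,\Sigma,\Gamma,\bot,q_0,\delta,F)$ over a pushdown alphabet $\Sigma=\Sigma_c\cup\Sigma_r\cup\Sigma_{\mathit{int}}$ (deterministic; call letters push a symbol of $\Gamma\setminus\{\bot\}$, internal letters change only the state, return letters pop the top symbol $\gamma\ne\bot$ and use it, or read $\bot$ without popping); configurations $\alpha q$, $\alpha\in\bot(\Gamma\setminus\{\bot\})^*$; $\delta(c,w)$ the configuration reached from $c$ on $w$; $\mathcal L(c)$ the set of words leading from $c$ to a state in $F$. Well-matched words $W$: smallest set containing $\varepsilon$ and $\Sigma_{\mathit{int}}$, closed under concatenation and under $w\mapsto awb$ ($a\in\Sigma_c$, $b\in\Sigma_r$). Descending words $D$: words factorizable into well-matched factors and return letters. $\varphi:W\to Q^Q$ is the homomorphism with $\delta(\alpha p,w)=\alpha\,\varphi(w)(p)$. $\mathrm{rConf}$: configurations reachable from $\bot q_0$; $\mathsf{rep}(c)$: length-lexicographically least (for fixed linear orders on $\Gamma,Q$) $c'\in\mathrm{rConf}$ with $\mathcal L(c')=\mathcal L(c)$; $\nu_A(w)=\mathsf{rep}(\delta(\bot q_0,w))$. For $w=a_1\cdots a_n\in D$ each suffix is descending and $\nu_A(a_i\cdots a_n)=\bot q_i$ for some $q_i\in Q$; $\sigma_0(w)=q_1\cdots q_n\in Q^*$; for nonempty $w\in W$, $\sigma_1(w)=\varphi(w)q_2\cdots q_n$,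 a word over the alphabet $Q\cup Q^Q$. *)

theory Defs
  imports Main
begin

datatype ('c, 'r, 'i) psym = Call 'c | Ret 'r | Intl 'i

text \<open>States Q = UNIV :: 'q, the stack alphabet without bottom Gamma - {bot} = UNIV :: 'g.
  A configuration (alpha, q) stands for bot alpha q, where alpha is listed from
  bottom to top (the last element is the top of the stack).
  Return transitions get Some gamma for top symbol gamma, None for reading bot.\<close>
record ('q, 'g, 'c, 'r, 'i) vpa =
  init :: 'q
  fin  :: "'q set"
  dcall :: "'q \<Rightarrow> 'c \<Rightarrow> 'q \<times> 'g"
  dret  :: "'q \<Rightarrow> 'r \<Rightarrow> 'g option \<Rightarrow> 'q"
  dint  :: "'q \<Rightarrow> 'i \<Rightarrow> 'q"

type_synonym ('g, 'q) conf = "'g list \<times> 'q"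

fun step :: "('q, 'g, 'c, 'r, 'i, 'z) vpa_scheme \<Rightarrow> ('g, 'q) conf \<Rightarrow> ('c, 'r, 'i) psym \<Rightarrow> ('g, 'q) conf" where
  "step A (al, p) (Call a) = (let (q, g) = dcall A p a in (al @ [g], q))"
| "step A (al, p) (Intl a) = (al, dint A p a)"
| "step A (al, p) (Ret b) =
     (if al = [] then (al, dret A p b None) else (butlast al, dret A p b (Some (last al))))"

definition delta :: "('q, 'g, 'c, 'r, 'i, 'z) vpa_scheme \<Rightarrow> ('g, 'q) conf \<Rightarrow> ('c, 'r, 'i) psym list \<Rightarrow> ('g, 'q) conf" where
  "delta A c w = foldl (step A) c w"

definition lang :: "('q, 'g, 'c, 'r, 'i, 'z) vpa_scheme \<Rightarrow> ('g, 'q) conf \<Rightarrow> ('c, 'r, 'i) psym list set" where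
  "lang A c = {w. snd (delta A c w) \<in> fin A}"

definition rConf :: "('q, 'g, 'c, 'r, 'i, 'z) vpa_scheme \<Rightarrow> ('g, 'q) conf set" where
  "rConf A = {delta A ([], init A) w | w. True}"

text \<open>Length-lexicographic order on configurations, read as words bot alpha q
  over Gamma \<union> Q, using the given linear orders on 'g and 'q.\<close>
definition llex_le :: "('g::linorder, 'q::linorder) conf \<Rightarrow> ('g, 'q) conf \<Rightarrow> bool" where
  "llex_le c d \<longleftrightarrow>
     length (fst c) < length (fst d)
   \<or> (length (fst c) = length (fst d) \<and> (fst c, fst d) \<in> lexord {(x, y). x < y})
   \<or> (fst c = fst d \<and> snd c \<le> snd d)"

definition rep :: "('q::linorder, 'g::linorder, 'c, 'r, 'i, 'z) vpa_scheme \<Rightarrow> ('g, 'q) conf \<Rightarrow> ('g, 'q) conf" where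
  "rep A c = (THE c'. c' \<in> rConf A \<and> lang A c' = lang A c \<and>
       (\<forall>c''\<in>rConf A. lang A c'' = lang A c \<longrightarrow> llex_le c' c''))"

definition nu :: "('q::linorder, 'g::linorder, 'c, 'r, 'i, 'z) vpa_scheme \<Rightarrow> ('c, 'r, 'i) psym list \<Rightarrow> ('g, 'q) conf" where
  "nu A w = rep A (delta A ([], init A) w)"

inductive_set WM :: "('c, 'r, 'i) psym list set" where
  WM_Nil: "[] \<in> WM"
| WM_Int: "[Intl i] \<in> WM"
| WM_app: "u \<in> WM \<Longrightarrow> v \<in> WM \<Longrightarrow> u @ v \<in> WM"
| WM_nest: "w \<in> WM \<Longrightarrow> [Call a] @ w @ [Ret b] \<in> WM"

inductive_set DW :: "('c, 'r, 'i) psym list set" where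
  DW_Nil: "[] \<in> DW"
| DW_WM: "u \<in> WM \<Longrightarrow> v \<in> DW \<Longrightarrow> u @ v \<in> DW"
| DW_Ret: "v \<in> DW \<Longrightarrow> Ret b # v \<in> DW"

definition phi :: "('q, 'g, 'c, 'r, 'i, 'z) vpa_scheme \<Rightarrow> ('c, 'r, 'i) psym list \<Rightarrow> 'q \<Rightarrow> 'q" where
  "phi A w = (\<lambda>p. THE q. \<forall>al. delta A (al, p) w = (al, q))"

text \<open>sigma_0(a_1...a_n) = q_1 ... q_n where nu(a_i ... a_n) = bot q_i.\<close>
definition sigma0 :: "('q::linorder, 'g::linorder, 'c, 'r, 'i, 'z) vpa_scheme \<Rightarrow> ('c, 'r, 'i) psym list \<Rightarrow> 'q list" where
  "sigma0 A w = map (\<lambda>i. snd (nu A (drop i w) :: ('g, 'q) conf)) [0..<length w]"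

text \<open>sigma_1(w) = phi(w) q_2 ... q_n over the alphabet Q \<union> Q^Q (encoded as a sum type).\<close>
definition sigma1 :: "('q::linorder, 'g::linorder, 'c, 'r, 'i, 'z) vpa_scheme \<Rightarrow> ('c, 'r, 'i) psym list \<Rightarrow> ('q + ('q \<Rightarrow> 'q)) list" where
  "sigma1 A w = Inr (phi A w) # map Inl (tl (sigma0 A w))"

definition S0 :: "('q::linorder, 'g::linorder, 'c, 'r, 'i, 'z) vpa_scheme \<Rightarrow> 'q list set" where
  "S0 A = sigma0 A ` DW"

definition S1 :: "('q::linorder, 'g::linorder, 'c, 'r, 'i, 'z) vpa_scheme \<Rightarrow> ('q + ('q \<Rightarrow> 'q)) list set" where
  "S1 A = sigma1 A ` (WM - {[]})"

datatype ('n, 't) gsym = NT 'n | Tm 't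

inductive derive1 :: "('n \<times> ('n, 't) gsym list) set \<Rightarrow> ('n, 't) gsym list \<Rightarrow> ('n, 't) gsym list \<Rightarrow> bool"
  for P where
  "(A, rhs) \<in> P \<Longrightarrow> derive1 P (u @ [NT A] @ v) (u @ rhs @ v)"

definition cfg_lang :: "('n \<times> ('n, 't) gsym list) set \<Rightarrow> 'n \<Rightarrow> 't list set" where
  "cfg_lang P S = {w. (derive1 P)\<^sup>*\<^sup>* [NT S] (map Tm w)}"

text \<open>A language is context-free iff generated by a finite context-free grammar
  (nonterminals taken from nat, without loss of generality).\<close>
definition context_free :: "'t list set \<Rightarrow> bool" where
  "context_free L \<longleftrightarrow> (\<exists>(P :: (nat \<times> (nat, 't) gsym list) set) S. finite P \<and> L = cfg_lang P S)"

end

theory Submission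
  imports Defs "HOL-Library.Countable"
begin

(* For a descending word read from the empty stack, the stack is empty again after every
   top-level return letter and after every well-matched factor. Hence the configuration reached
   on a suffix s is the empty stack with state f_s(q0), where f_s in Q^Q is the state function
   of s, and the letter of sigma0 at s is a function of f_s(q0). A grammar reading the word from
   the left guesses the state function f of the remaining word; each step (a return, an internal
   letter, or a block Call x Ret) splits f as f' o g, and the letter for the current suffix,
   determined by f(q0), is emitted at once. Inside a block x the relevant state function is that
   of the suffix of x followed by everything after the block, so the nonterminal also carries this
   continuation k. Nonterminals (k, f, desc) range over the finite set Q^Q x Q^Q x bool, so the
   grammar is finite. For sigma1 only the first letter is treated differently. *)

section \<open>Context-free grammars\<close>

fun sym_lang :: "('n \<Rightarrow> 't list set) \<Rightarrow> ('n, 't) gsym \<Rightarrow> 't list set" where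
  "sym_lang L (NT X) = L X"
| "sym_lang L (Tm t) = {[t]}"

fun syms_lang :: "('n \<Rightarrow> 't list set) \<Rightarrow> ('n, 't) gsym list \<Rightarrow> 't list set" where
  "syms_lang L [] = {[]}"
| "syms_lang L (s # r) = {u @ v | u v. u \<in> sym_lang L s \<and> v \<in> syms_lang L r}"

lemma syms_lang_Cons_Tm [simp]: "syms_lang L (Tm t # r) = (#) t ` syms_lang L r"
  by auto

lemma syms_lang_single_NT [simp]: "syms_lang L [NT X] = L X"
  by auto

lemma syms_lang_Cons_TmI: "v \<in> syms_lang L r \<Longrightarrow> t # v \<in> syms_lang L (Tm t # r)"
  by simp

lemma syms_lang_Cons_NTI: "u \<in> L X \<Longrightarrow> v \<in> syms_lang L r \<Longrightarrow> u @ v \<in> syms_lang L (NT X # r)"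
  by auto

lemma syms_lang_append: "syms_lang L (r @ r') = {u @ v | u v. u \<in> syms_lang L r \<and> v \<in> syms_lang L r'}"
proof (induction r)
  case (Cons s r)
  show ?case
    by (auto simp: Cons) (metis append.assoc)+
qed simp

lemma syms_lang_map_Tm [simp]: "syms_lang L (map Tm w) = {w}"
  by (induction w) auto

lemma syms_lang_mono: "(\<And>X. L X \<subseteq> L' X) \<Longrightarrow> syms_lang L r \<subseteq> syms_lang L' r"
proof (induction r)
  case (Cons s r)
  then show ?case by (cases s) fastforce+
qed simp

lemma syms_lang_rename: "syms_lang L (map (map_gsym f id) r) = syms_lang (L \<circ> f) r"
proof (induction r)
  case (Cons s r)
  then show ?case by (cases s) simp_all
qed simp

lemma derive1_syms_lang_subset:
  assumes closed: "\<And>X r. (X, r) \<in> P \<Longrightarrow> syms_lang L r \<subseteq> L X" and "derive1 P x y"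
  shows "syms_lang L y \<subseteq> syms_lang L x"
  using \<open>derive1 P x y\<close>
proof cases
  case (1 X r u v)
  then have "syms_lang L r \<subseteq> syms_lang L [NT X]" using closed by simp
  then show ?thesis using 1 by (auto simp: syms_lang_append) blast
qed

lemma cfg_lang_least:
  assumes closed: "\<And>X r. (X, r) \<in> P \<Longrightarrow> syms_lang L r \<subseteq> L X"
  shows "cfg_lang P S \<subseteq> L S"
proof
  fix w assume "w \<in> cfg_lang P S"
  then have "(derive1 P)\<^sup>*\<^sup>* [NT S] (map Tm w)" by (simp add: cfg_lang_def)
  then have "syms_lang L (map Tm w) \<subseteq> syms_lang L [NT S]"
    by (induction rule: rtranclp_induct) (use derive1_syms_lang_subset[OF closed] in blast)+
  then show "w \<in> L S" by simp
qed

lemma derive1_context: "derive1 P x y \<Longrightarrow> derive1 P (u @ x @ v) (u @ y @ v)"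
proof (induction rule: derive1.induct)
  case (1 X r u' v')
  show ?case using derive1.intros[OF 1, of "u @ u'" "v' @ v"] by simp
qed

lemma derives_append:
  assumes "(derive1 P)\<^sup>*\<^sup>* x x'" and "(derive1 P)\<^sup>*\<^sup>* y y'"
  shows "(derive1 P)\<^sup>*\<^sup>* (x @ y) (x' @ y')"
proof -
  have in_context: "(derive1 P)\<^sup>*\<^sup>* (u @ z @ v) (u @ z' @ v)" if "(derive1 P)\<^sup>*\<^sup>* z z'" for u z z' v
    using that by (induction rule: rtranclp_induct) (auto intro: rtranclp.rtrancl_into_rtrancl derive1_context)
  show ?thesis
    using in_context[OF assms(1), of "[]" y] in_context[OF assms(2), of x' "[]"] by simp
qed

lemma derives_syms_lang: "w \<in> syms_lang (cfg_lang P) r \<Longrightarrow> (derive1 P)\<^sup>*\<^sup>* r (map Tm w)"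
proof (induction r arbitrary: w)
  case (Cons s r)
  then obtain u v where w: "w = u @ v" and u: "u \<in> sym_lang (cfg_lang P) s" and v: "v \<in> syms_lang (cfg_lang P) r"
    by auto
  have "(derive1 P)\<^sup>*\<^sup>* [s] (map Tm u)"
    using u by (cases s) (auto simp: cfg_lang_def)
  from derives_append[OF this Cons.IH[OF v]] show ?case by (simp add: w)
qed simp

lemma syms_lang_cfg_lang_subset: "(X, r) \<in> P \<Longrightarrow> syms_lang (cfg_lang P) r \<subseteq> cfg_lang P X"
  using derive1.intros[of X r P "[]" "[]"] derives_syms_lang
  by (fastforce simp: cfg_lang_def intro: converse_rtranclp_into_rtranclp)

definition rename_prods :: "('n \<Rightarrow> 'm) \<Rightarrow> ('n \<times> ('n, 't) gsym list) set \<Rightarrow> ('m \<times> ('m, 't) gsym list) set" where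
  "rename_prods f P = (\<lambda>(X, r). (f X, map (map_gsym f id) r)) ` P"

lemma derives_rename:
  assumes "rename_prods f P \<subseteq> P'" and "(derive1 P)\<^sup>*\<^sup>* x y"
  shows "(derive1 P')\<^sup>*\<^sup>* (map (map_gsym f id) x) (map (map_gsym f id) y)"
  using assms(2)
proof (induction rule: rtranclp_induct)
  case (step y z)
  from \<open>derive1 P y z\<close> have "derive1 P' (map (map_gsym f id) y) (map (map_gsym f id) z)"
  proof cases
    case (1 X r u v)
    then have "(f X, map (map_gsym f id) r) \<in> P'" using assms(1) by (force simp: rename_prods_def)
    from derive1.intros[OF this, of "map (map_gsym f id) u" "map (map_gsym f id) v"] show ?thesis
      using 1 by simp
  qed
  with step.IH show ?case by (rule rtranclp.rtrancl_into_rtrancl)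
qed simp

lemma cfg_lang_rename_subset:
  assumes "rename_prods f P \<subseteq> P'"
  shows "cfg_lang P S \<subseteq> cfg_lang P' (f S)"
proof
  fix w assume "w \<in> cfg_lang P S"
  with derives_rename[OF assms, of "[NT S]" "map Tm w"] show "w \<in> cfg_lang P' (f S)"
    by (simp add: cfg_lang_def comp_def)
qed

lemma cfg_lang_rename:
  assumes "inj f"
  shows "cfg_lang (rename_prods f P) (f S) = cfg_lang P S"
proof
  have "syms_lang (\<lambda>Y. cfg_lang P (inv f Y)) r' \<subseteq> cfg_lang P (inv f Y')"
    if "(Y', r') \<in> rename_prods f P" for Y' r'
  proof -
    from that obtain X r where "(X, r) \<in> P" "Y' = f X" "r' = map (map_gsym f id) r"
      by (auto simp: rename_prods_def)
    then show ?thesis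
      using syms_lang_cfg_lang_subset by (simp add: syms_lang_rename comp_def inv_f_f[OF assms])
  qed
  from cfg_lang_least[of "rename_prods f P", OF this, of "f S"]
  show "cfg_lang (rename_prods f P) (f S) \<subseteq> cfg_lang P S"
    by (simp add: inv_f_f[OF assms])
qed (rule cfg_lang_rename_subset, simp)

lemma context_free_cfg_lang:
  fixes P :: "('n::countable \<times> ('n, 't) gsym list) set"
  assumes "finite P"
  shows "context_free (cfg_lang P S)"
  unfolding context_free_def
  using assms cfg_lang_rename[of to_nat P S, symmetric]
  by (auto simp: rename_prods_def)

text \<open>A fresh start symbol with one production per member of \<open>R\<close>.\<close>
lemma context_free_UN_syms_lang:
  fixes P :: "('n::countable \<times> ('n, 't) gsym list) set"
  assumes "finite P" and "finite R"
  shows "context_free (\<Union>r\<in>R. syms_lang (cfg_lang P) r)"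
proof -
  define P' where "P' = rename_prods Some P \<union> (\<lambda>r. (None, map (map_gsym Some id) r)) ` R"
  define L where "L = case_option (\<Union>r\<in>R. syms_lang (cfg_lang P) r) (cfg_lang P)"
  have lift: "cfg_lang P X \<subseteq> cfg_lang P' (Some X)" for X
    by (rule cfg_lang_rename_subset) (simp add: P'_def)
  have "syms_lang L r' \<subseteq> L Y" if "(Y, r') \<in> P'" for Y r'
    using that syms_lang_cfg_lang_subset
    by (fastforce simp: P'_def rename_prods_def syms_lang_rename L_def comp_def)
  then have "cfg_lang P' None \<subseteq> (\<Union>r\<in>R. syms_lang (cfg_lang P) r)"
    using cfg_lang_least[of P' L None] by (simp add: L_def)
  moreover have "syms_lang (cfg_lang P) r \<subseteq> cfg_lang P' None" if "r \<in> R" for r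
  proof -
    have "syms_lang (cfg_lang P) r \<subseteq> syms_lang (cfg_lang P' \<circ> Some) r"
      using lift by (intro syms_lang_mono) simp
    also have "\<dots> \<subseteq> cfg_lang P' None"
      using syms_lang_cfg_lang_subset[of None "map (map_gsym Some id) r" P'] that
      by (simp add: P'_def syms_lang_rename)
    finally show ?thesis .
  qed
  moreover have "finite P'"
    using assms by (simp add: P'_def rename_prods_def)
  ultimately show ?thesis
    using context_free_cfg_lang[of P' None] by (metis UN_least subset_antisym)
qed

section \<open>Right-recursive well-matched and descending words\<close>

inductive_set WMR :: "('c, 'r, 'i) psym list set" where
  WMR_Nil: "[] \<in> WMR"
| WMR_Intl: "w \<in> WMR \<Longrightarrow> Intl a # w \<in> WMR"
| WMR_Call: "x \<in> WMR \<Longrightarrow> w \<in> WMR \<Longrightarrow> Call a # x @ Ret b # w \<in> WMR"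

inductive_set DWR :: "('c, 'r, 'i) psym list set" where
  DWR_Nil: "[] \<in> DWR"
| DWR_Ret: "d \<in> DWR \<Longrightarrow> Ret b # d \<in> DWR"
| DWR_Intl: "d \<in> DWR \<Longrightarrow> Intl a # d \<in> DWR"
| DWR_Call: "x \<in> WMR \<Longrightarrow> d \<in> DWR \<Longrightarrow> Call a # x @ Ret b # d \<in> DWR"

lemma WMR_append: "u \<in> WMR \<Longrightarrow> v \<in> WMR \<Longrightarrow> u @ v \<in> WMR"
  by (induction u rule: WMR.induct) (simp_all add: WMR.intros)

lemma WMR_append_DWR: "u \<in> WMR \<Longrightarrow> d \<in> DWR \<Longrightarrow> u @ d \<in> DWR"
  by (induction u rule: WMR.induct) (simp_all add: DWR.intros)

lemma WMR_imp_DWR: "x \<in> WMR \<Longrightarrow> x \<in> DWR"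
  using WMR_append_DWR[OF _ DWR_Nil] by simp

lemma tl_DWR: "d \<in> DWR \<Longrightarrow> tl d \<in> DWR"
  by (induction d rule: DWR.induct) (simp_all add: DWR.intros WMR_append_DWR)

lemma WM_eq_WMR: "WM = WMR"
proof
  show "WM \<subseteq> WMR"
  proof
    fix w
    assume "w \<in> WM"
    then show "w \<in> WMR"
    proof (induction w rule: WM.induct)
      case (WM_Int i)
      show ?case by (rule WMR_Intl[OF WMR_Nil])
    next
      case (WM_nest w a b)
      then show ?case using WMR_Call[OF _ WMR_Nil] by simp
    qed (simp_all add: WMR_Nil WMR_append)
  qed
  show "WMR \<subseteq> WM"
  proof
    fix w
    assume "w \<in> WMR"
    then show "w \<in> WM"
    proof (induction w rule: WMR.induct)
      case (WMR_Intl w a)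
      then show ?case using WM_app[OF WM_Int] by fastforce
    next
      case (WMR_Call x w a b)
      then show ?case using WM_app[OF WM_nest] by fastforce
    qed (rule WM_Nil)
  qed
qed

lemma DW_eq_DWR: "DW = DWR"
proof
  show "DW \<subseteq> DWR"
  proof
    fix w
    assume "w \<in> DW"
    then show "w \<in> DWR"
      by (induction w rule: DW.induct) (simp_all add: DWR.intros WMR_append_DWR WM_eq_WMR)
  qed
  show "DWR \<subseteq> DW"
  proof
    fix w
    assume "w \<in> DWR"
    then show "w \<in> DW"
    proof (induction w rule: DWR.induct)
      case (DWR_Intl d a)
      then show ?case using DW_WM[OF WM_Int] by fastforce
    next
      case (DWR_Call x d a b)
      then show ?case using DW_WM[OF WM_nest] WM_eq_WMR by fastforce
    qed (simp_all add: DW.intros)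
  qed
qed

section \<open>State functions\<close>

lemma delta_Nil [simp]: "delta A c [] = c"
  by (simp add: delta_def)

lemma delta_Cons [simp]: "delta A c (a # w) = delta A (step A c a) w"
  by (simp add: delta_def)

lemma delta_append: "delta A c (u @ v) = delta A (delta A c u) v"
  by (simp add: delta_def)

definition state_fun :: "('q, 'g, 'c, 'r, 'i, 'z) vpa_scheme \<Rightarrow> ('c, 'r, 'i) psym list \<Rightarrow> 'q \<Rightarrow> 'q" where
  "state_fun A w p = snd (delta A ([], p) w)"

definition ret_bot :: "('q, 'g, 'c, 'r, 'i, 'z) vpa_scheme \<Rightarrow> 'r \<Rightarrow> 'q \<Rightarrow> 'q" where
  "ret_bot A b p = dret A p b None"

definition intl_fun :: "('q, 'g, 'c, 'r, 'i, 'z) vpa_scheme \<Rightarrow> 'i \<Rightarrow> 'q \<Rightarrow> 'q" where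
  "intl_fun A a p = dint A p a"

definition nest_fun :: "('q, 'g, 'c, 'r, 'i, 'z) vpa_scheme \<Rightarrow> 'c \<Rightarrow> 'r \<Rightarrow> ('q \<Rightarrow> 'q) \<Rightarrow> 'q \<Rightarrow> 'q" where
  "nest_fun A a b e p = (case dcall A p a of (q, g) \<Rightarrow> dret A (e q) b (Some g))"

lemma delta_WMR: "x \<in> WMR \<Longrightarrow> delta A (al, p) x = (al, state_fun A x p)"
proof (induction x arbitrary: al p rule: WMR.induct)
  case (WMR_Call x w a b)
  obtain q g where "dcall A p a = (q, g)" by force
  with WMR_Call.IH show ?case
    by (simp add: state_fun_def[of A "Call a # x @ Ret b # w"] delta_append)
qed (simp_all add: state_fun_def[of A "[]"] state_fun_def[of A "Intl _ # _"])

lemma state_fun_Nil [simp]: "state_fun A [] = id"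
  by (auto simp: state_fun_def)

lemma state_fun_Ret: "state_fun A (Ret b # d) = state_fun A d \<circ> ret_bot A b"
  by (auto simp: state_fun_def ret_bot_def)

lemma state_fun_Intl: "state_fun A (Intl a # d) = state_fun A d \<circ> intl_fun A a"
  by (auto simp: state_fun_def intl_fun_def)

lemma state_fun_Call:
  assumes "x \<in> WMR"
  shows "state_fun A (Call a # x @ Ret b # d) = state_fun A d \<circ> nest_fun A a b (state_fun A x)"
proof
  fix p
  obtain q g where "dcall A p a = (q, g)" by force
  then show "state_fun A (Call a # x @ Ret b # d) p = (state_fun A d \<circ> nest_fun A a b (state_fun A x)) p"
    by (simp add: state_fun_def[of A "Call a # x @ Ret b # d"] state_fun_def[of A d]
        nest_fun_def delta_append delta_WMR[OF assms])
qed

lemma delta_DWR: "d \<in> DWR \<Longrightarrow> delta A ([], p) d = ([], state_fun A d p)"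
proof (induction d arbitrary: p rule: DWR.induct)
  case (DWR_Call x d a b)
  obtain q g where "dcall A p a = (q, g)" by force
  with DWR_Call show ?case
    by (simp add: delta_WMR state_fun_Call nest_fun_def delta_append)
qed (simp_all add: state_fun_Ret state_fun_Intl ret_bot_def intl_fun_def)

lemma state_fun_append: "u \<in> DWR \<Longrightarrow> state_fun A (u @ v) = state_fun A v \<circ> state_fun A u"
  by (auto simp: state_fun_def[of A "u @ v"] delta_append delta_DWR state_fun_def[of A v])

lemma phi_WMR: "x \<in> WMR \<Longrightarrow> phi A x = state_fun A x"
  unfolding phi_def by (rule ext, rule the_equality) (auto simp: delta_WMR)

section \<open>A grammar for the labels of suffixes\<close>

text \<open>Here \<open>k\<close> stands for the state function of the part of the whole word that follows
  \<open>w\<close>, so the label of a suffix \<open>s\<close> of \<open>w\<close> is read off the state reached from the initial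
  state on \<open>s\<close> followed by that part.\<close>
fun suffix_labels ::
  "('q, 'g, 'c, 'r, 'i, 'z) vpa_scheme \<Rightarrow> ('q \<Rightarrow> 't) \<Rightarrow> ('q \<Rightarrow> 'q) \<Rightarrow> ('c, 'r, 'i) psym list \<Rightarrow> 't list"
where
  "suffix_labels A \<tau> k [] = []"
| "suffix_labels A \<tau> k (a # w) = \<tau> (k (state_fun A (a # w) (init A))) # suffix_labels A \<tau> k w"

lemma suffix_labels_append:
  "u \<in> DWR \<Longrightarrow>
    suffix_labels A \<tau> k (u @ v) = suffix_labels A \<tau> (k \<circ> state_fun A v) u @ suffix_labels A \<tau> k v"
proof (induction u)
  case (Cons a u)
  have "u \<in> DWR" using tl_DWR[OF Cons.prems] by simp
  moreover have "state_fun A (a # u @ v) = state_fun A v \<circ> state_fun A (a # u)"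
    using state_fun_append[OF Cons.prems] by simp
  ultimately show ?case using Cons.IH by simp
qed simp

lemma map_suffix_labels: "map h (suffix_labels A \<tau> k w) = suffix_labels A (h \<circ> \<tau>) k w"
  by (induction w) auto

lemma suffix_labels_Call:
  assumes "x \<in> WMR" and "d \<in> DWR"
  shows "suffix_labels A \<tau> k (Call a # x @ Ret b # d) =
    \<tau> (k (state_fun A d (nest_fun A a b (state_fun A x) (init A)))) #
    suffix_labels A \<tau> (k \<circ> state_fun A d \<circ> ret_bot A b) x @
    \<tau> (k (state_fun A d (ret_bot A b (init A)))) # suffix_labels A \<tau> k d"
  using suffix_labels_append[OF WMR_imp_DWR[OF assms(1)], of A \<tau> k "Ret b # d"]
  by (simp add: state_fun_Call[OF assms(1)] state_fun_Ret comp_assoc del: append.simps)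

lemma suffix_labels_Ret:
  "suffix_labels A \<tau> k (Ret b # d) = \<tau> (k (state_fun A d (ret_bot A b (init A)))) # suffix_labels A \<tau> k d"
  by (simp add: state_fun_Ret)

lemma suffix_labels_Intl:
  "suffix_labels A \<tau> k (Intl a # d) = \<tau> (k (state_fun A d (intl_fun A a (init A)))) # suffix_labels A \<tau> k d"
  by (simp add: state_fun_Intl)

type_synonym 'q label_nt = "('q \<Rightarrow> 'q) \<times> ('q \<Rightarrow> 'q) \<times> bool"

fun label_lang :: "('q, 'g, 'c, 'r, 'i, 'z) vpa_scheme \<Rightarrow> ('q \<Rightarrow> 't) \<Rightarrow> 'q label_nt \<Rightarrow> 't list set" where
  "label_lang A \<tau> (k, f, desc) =
    {suffix_labels A \<tau> k w | w. w \<in> (if desc then DWR else WMR) \<and> state_fun A w = f}"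

lemma suffix_labels_in_label_lang:
  "w \<in> (if desc then DWR else WMR) \<Longrightarrow> state_fun A w = f \<Longrightarrow>
    suffix_labels A \<tau> k w \<in> label_lang A \<tau> (k, f, desc)"
  by auto

inductive_set label_prods ::
  "('q, 'g, 'c, 'r, 'i, 'z) vpa_scheme \<Rightarrow> ('q \<Rightarrow> 't) \<Rightarrow> ('q label_nt \<times> ('q label_nt, 't) gsym list) set"
  for A \<tau>
where
  label_prods_Nil: "((k, id, desc), []) \<in> label_prods A \<tau>"
| label_prods_Ret: "((k, f \<circ> ret_bot A b, True),
    [Tm (\<tau> (k (f (ret_bot A b (init A))))), NT (k, f, True)]) \<in> label_prods A \<tau>"
| label_prods_Intl: "((k, f \<circ> intl_fun A a, desc),
    [Tm (\<tau> (k (f (intl_fun A a (init A))))), NT (k, f, desc)]) \<in> label_prods A \<tau>"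
| label_prods_Call: "((k, f \<circ> nest_fun A a b e, desc),
    [Tm (\<tau> (k (f (nest_fun A a b e (init A))))), NT (k \<circ> f \<circ> ret_bot A b, e, False),
     Tm (\<tau> (k (f (ret_bot A b (init A))))), NT (k, f, desc)]) \<in> label_prods A \<tau>"

lemma finite_label_prods:
  fixes A :: "('q::finite, 'g, 'c::finite, 'r::finite, 'i::finite, 'z) vpa_scheme"
    and \<tau> :: "'q \<Rightarrow> 't"
  shows "finite (label_prods A \<tau>)"
proof -
  let ?syms = "range NT \<union> Tm ` range \<tau> :: ('q label_nt, 't) gsym set"
  have "set r \<subseteq> ?syms \<and> length r \<le> 4" if "((k, f, desc), r) \<in> label_prods A \<tau>" for k f desc r
    using that by cases auto
  then have "label_prods A \<tau> \<subseteq> UNIV \<times> {r. set r \<subseteq> ?syms \<and> length r \<le> 4}"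
    by force
  moreover have "finite ((UNIV :: 'q label_nt set) \<times> {r. set r \<subseteq> ?syms \<and> length r \<le> 4})"
    by (intro finite_cartesian_product finite_lists_length_le) simp_all
  ultimately show ?thesis by (rule finite_subset)
qed

lemma label_lang_Nil_closed: "syms_lang (label_lang A \<tau>) [] \<subseteq> label_lang A \<tau> (k, id, desc)"
  using suffix_labels_in_label_lang[of "[]" desc A id \<tau> k] by (simp add: DWR_Nil WMR_Nil)

lemma label_lang_Ret_closed:
  "syms_lang (label_lang A \<tau>) [Tm (\<tau> (k (f (ret_bot A b (init A))))), NT (k, f, True)]
    \<subseteq> label_lang A \<tau> (k, f \<circ> ret_bot A b, True)"
proof
  fix z assume "z \<in> syms_lang (label_lang A \<tau>) [Tm (\<tau> (k (f (ret_bot A b (init A))))), NT (k, f, True)]"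
  then obtain d where "d \<in> DWR" "state_fun A d = f" and z: "z = suffix_labels A \<tau> k (Ret b # d)"
    by (auto simp: state_fun_Ret)
  show "z \<in> label_lang A \<tau> (k, f \<circ> ret_bot A b, True)"
    unfolding z by (rule suffix_labels_in_label_lang)
      (simp_all add: \<open>d \<in> DWR\<close> \<open>state_fun A d = f\<close> DWR_Ret state_fun_Ret)
qed

lemma label_lang_Intl_closed:
  "syms_lang (label_lang A \<tau>) [Tm (\<tau> (k (f (intl_fun A a (init A))))), NT (k, f, desc)]
    \<subseteq> label_lang A \<tau> (k, f \<circ> intl_fun A a, desc)"
proof
  fix z assume "z \<in> syms_lang (label_lang A \<tau>) [Tm (\<tau> (k (f (intl_fun A a (init A))))), NT (k, f, desc)]"
  then obtain d where "d \<in> (if desc then DWR else WMR)" "state_fun A d = f"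
    and z: "z = suffix_labels A \<tau> k (Intl a # d)"
    by (auto simp: state_fun_Intl)
  show "z \<in> label_lang A \<tau> (k, f \<circ> intl_fun A a, desc)"
    unfolding z by (rule suffix_labels_in_label_lang)
      (use \<open>d \<in> _\<close> \<open>state_fun A d = f\<close> in \<open>auto simp: DWR_Intl WMR_Intl state_fun_Intl\<close>)
qed

lemma label_lang_Call_closed:
  "syms_lang (label_lang A \<tau>)
      [Tm (\<tau> (k (f (nest_fun A a b e (init A))))), NT (k \<circ> f \<circ> ret_bot A b, e, False),
       Tm (\<tau> (k (f (ret_bot A b (init A))))), NT (k, f, desc)]
    \<subseteq> label_lang A \<tau> (k, f \<circ> nest_fun A a b e, desc)"
    (is "?L \<subseteq> _")
proof
  fix z assume "z \<in> ?L"
  then obtain x d where "x \<in> WMR" "state_fun A x = e"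
    and "d \<in> (if desc then DWR else WMR)" "state_fun A d = f"
    and z: "z = suffix_labels A \<tau> k (Call a # x @ Ret b # d)"
    by (auto simp: suffix_labels_Call WMR_imp_DWR simp del: suffix_labels.simps(2) split: if_splits)
  show "z \<in> label_lang A \<tau> (k, f \<circ> nest_fun A a b e, desc)"
    unfolding z by (rule suffix_labels_in_label_lang)
      (use \<open>x \<in> WMR\<close> \<open>d \<in> _\<close> \<open>state_fun A x = e\<close> \<open>state_fun A d = f\<close>
        in \<open>auto simp: DWR_Call WMR_Call state_fun_Call\<close>)
qed

lemma label_prods_closed:
  assumes "((k, f, desc), r) \<in> label_prods A \<tau>"
  shows "syms_lang (label_lang A \<tau>) r \<subseteq> label_lang A \<tau> (k, f, desc)"
  using assms
  by cases
    (simp_all only: label_lang_Nil_closed label_lang_Ret_closed label_lang_Intl_closed label_lang_Call_closed)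

lemma suffix_labels_WMR_in_cfg_lang:
  "x \<in> WMR \<Longrightarrow> suffix_labels A \<tau> k x \<in> cfg_lang (label_prods A \<tau>) (k, state_fun A x, False)"
proof (induction x arbitrary: k rule: WMR.induct)
  case WMR_Nil
  show ?case using syms_lang_cfg_lang_subset[OF label_prods_Nil, of A \<tau> k False] by (simp add: id_def)
next
  case (WMR_Intl w a)
  have "suffix_labels A \<tau> k (Intl a # w) \<in> syms_lang (cfg_lang (label_prods A \<tau>))
      [Tm (\<tau> (k (state_fun A w (intl_fun A a (init A))))), NT (k, state_fun A w, False)]"
    unfolding suffix_labels_Intl using WMR_Intl.IH by (auto intro: syms_lang_Cons_TmI)
  from subsetD[OF syms_lang_cfg_lang_subset[OF label_prods_Intl] this] show ?case
    by (simp only: state_fun_Intl)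
next
  case (WMR_Call x w a b)
  have "suffix_labels A \<tau> k (Call a # x @ Ret b # w) \<in> syms_lang (cfg_lang (label_prods A \<tau>))
      [Tm (\<tau> (k (state_fun A w (nest_fun A a b (state_fun A x) (init A))))),
       NT (k \<circ> state_fun A w \<circ> ret_bot A b, state_fun A x, False),
       Tm (\<tau> (k (state_fun A w (ret_bot A b (init A))))), NT (k, state_fun A w, False)]"
    unfolding suffix_labels_Call[OF WMR_Call.hyps(1) WMR_imp_DWR[OF WMR_Call.hyps(2)]]
    by (intro syms_lang_Cons_TmI syms_lang_Cons_NTI) (simp_all add: WMR_Call.IH)
  from subsetD[OF syms_lang_cfg_lang_subset[OF label_prods_Call] this] show ?case
    by (simp only: state_fun_Call[OF WMR_Call.hyps(1)])
qed

lemma suffix_labels_DWR_in_cfg_lang: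
  "d \<in> DWR \<Longrightarrow> suffix_labels A \<tau> k d \<in> cfg_lang (label_prods A \<tau>) (k, state_fun A d, True)"
proof (induction d arbitrary: k rule: DWR.induct)
  case DWR_Nil
  show ?case using syms_lang_cfg_lang_subset[OF label_prods_Nil, of A \<tau> k True] by (simp add: id_def)
next
  case (DWR_Ret d b)
  have "suffix_labels A \<tau> k (Ret b # d) \<in> syms_lang (cfg_lang (label_prods A \<tau>))
      [Tm (\<tau> (k (state_fun A d (ret_bot A b (init A))))), NT (k, state_fun A d, True)]"
    unfolding suffix_labels_Ret using DWR_Ret.IH by (auto intro: syms_lang_Cons_TmI)
  from subsetD[OF syms_lang_cfg_lang_subset[OF label_prods_Ret] this] show ?case
    by (simp only: state_fun_Ret)
next
  case (DWR_Intl d a)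
  have "suffix_labels A \<tau> k (Intl a # d) \<in> syms_lang (cfg_lang (label_prods A \<tau>))
      [Tm (\<tau> (k (state_fun A d (intl_fun A a (init A))))), NT (k, state_fun A d, True)]"
    unfolding suffix_labels_Intl using DWR_Intl.IH by (auto intro: syms_lang_Cons_TmI)
  from subsetD[OF syms_lang_cfg_lang_subset[OF label_prods_Intl] this] show ?case
    by (simp only: state_fun_Intl)
next
  case (DWR_Call x d a b)
  have "suffix_labels A \<tau> k (Call a # x @ Ret b # d) \<in> syms_lang (cfg_lang (label_prods A \<tau>))
      [Tm (\<tau> (k (state_fun A d (nest_fun A a b (state_fun A x) (init A))))),
       NT (k \<circ> state_fun A d \<circ> ret_bot A b, state_fun A x, False),
       Tm (\<tau> (k (state_fun A d (ret_bot A b (init A))))), NT (k, state_fun A d, True)]"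
    unfolding suffix_labels_Call[OF DWR_Call.hyps]
    by (intro syms_lang_Cons_TmI syms_lang_Cons_NTI)
      (simp_all add: suffix_labels_WMR_in_cfg_lang[OF DWR_Call.hyps(1)] DWR_Call.IH)
  from subsetD[OF syms_lang_cfg_lang_subset[OF label_prods_Call] this] show ?case
    by (simp only: state_fun_Call[OF DWR_Call.hyps(1)])
qed

lemma cfg_lang_label_prods: "cfg_lang (label_prods A \<tau>) = label_lang A \<tau>"
proof
  fix X :: "'a label_nt"
  show "cfg_lang (label_prods A \<tau>) X = label_lang A \<tau> X"
  proof
    show "cfg_lang (label_prods A \<tau>) X \<subseteq> label_lang A \<tau> X"
      by (rule cfg_lang_least) (metis label_prods_closed prod_cases3)
    obtain k f desc where X: "X = (k, f, desc)" by (cases X)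
    show "label_lang A \<tau> X \<subseteq> cfg_lang (label_prods A \<tau>) X"
    proof
      fix z assume "z \<in> label_lang A \<tau> X"
      then obtain w where w: "w \<in> (if desc then DWR else WMR)" and "state_fun A w = f"
        and "z = suffix_labels A \<tau> k w"
        by (auto simp: X)
      then show "z \<in> cfg_lang (label_prods A \<tau>) X"
        using suffix_labels_DWR_in_cfg_lang[of w A \<tau> k] suffix_labels_WMR_in_cfg_lang[of w A \<tau> k]
        by (cases desc) (simp_all add: X)
    qed
  qed
qed

section \<open>The languages S0 and S1\<close>

definition rep_state :: "('q::linorder, 'g::linorder, 'c, 'r, 'i, 'z) vpa_scheme \<Rightarrow> 'q \<Rightarrow> 'q" where
  "rep_state A p = snd (rep A ([], p))"

lemma sigma0_Nil [simp]: "sigma0 A [] = []"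
  by (simp add: sigma0_def)

lemma sigma0_Cons: "sigma0 A (a # w) = snd (nu A (a # w)) # sigma0 A w"
proof -
  have "[0..<length (a # w)] = 0 # map Suc [0..<length w]"
    by (simp del: upt_Suc add: map_Suc_upt upt_conv_Cons)
  then show ?thesis by (simp del: upt_Suc add: sigma0_def comp_def)
qed

lemma sigma0_DWR: "w \<in> DWR \<Longrightarrow> sigma0 A w = suffix_labels A (rep_state A) id w"
proof (induction w)
  case (Cons a w)
  have "w \<in> DWR" using tl_DWR[OF Cons.prems] by simp
  moreover have "delta A ([], init A) (a # w) = ([], state_fun A (a # w) (init A))"
    by (rule delta_DWR[OF Cons.prems])
  ultimately show ?case
    using Cons.IH by (simp add: sigma0_Cons nu_def rep_state_def del: delta_Cons)
qed simp

lemma sigma1_WMR: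
  "x \<in> WMR \<Longrightarrow> sigma1 A x = Inr (state_fun A x) # tl (suffix_labels A (Inl \<circ> rep_state A) id x)"
  by (simp add: sigma1_def phi_WMR sigma0_DWR[OF WMR_imp_DWR] map_tl map_suffix_labels)

lemma S0_eq_UN_label_lang:
  "S0 A = (\<Union>r \<in> range (\<lambda>f. [NT (id, f, True)]). syms_lang (label_lang A (rep_state A)) r)"
  by (auto simp: S0_def DW_eq_DWR sigma0_DWR)

lemma sigma1_Intl:
  "w \<in> WMR \<Longrightarrow>
    sigma1 A (Intl a # w) = Inr (state_fun A w \<circ> intl_fun A a) # suffix_labels A (Inl \<circ> rep_state A) id w"
  by (simp add: sigma1_WMR WMR_Intl state_fun_Intl)

lemma sigma1_Call:
  assumes "x \<in> WMR" and "d \<in> WMR"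
  shows "sigma1 A (Call a # x @ Ret b # d) =
    Inr (state_fun A d \<circ> nest_fun A a b (state_fun A x)) #
    suffix_labels A (Inl \<circ> rep_state A) (state_fun A d \<circ> ret_bot A b) x @
    Inl (rep_state A (state_fun A d (ret_bot A b (init A)))) # suffix_labels A (Inl \<circ> rep_state A) id d"
  using assms
  by (simp add: sigma1_WMR WMR_Call state_fun_Call suffix_labels_Call WMR_imp_DWR
      del: suffix_labels.simps(2))

text \<open>\<open>sigma1\<close> replaces the first label by the state function of the whole word, so the
  first letter is produced by a separate start production.\<close>
definition S1_start_rhss ::
  "('q::linorder, 'g::linorder, 'c, 'r, 'i, 'z) vpa_scheme \<Rightarrow> ('q label_nt, 'q + ('q \<Rightarrow> 'q)) gsym list set"
where
  "S1_start_rhss A =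
    range (\<lambda>(f, a). [Tm (Inr (f \<circ> intl_fun A a)), NT (id, f, False)]) \<union>
    range (\<lambda>(f, a, b, e). [Tm (Inr (f \<circ> nest_fun A a b e)), NT (f \<circ> ret_bot A b, e, False),
      Tm (Inl (rep_state A (f (ret_bot A b (init A))))), NT (id, f, False)])"

lemma finite_S1_start_rhss:
  fixes A :: "('q::{finite,linorder}, 'g::linorder, 'c::finite, 'r::finite, 'i::finite, 'z) vpa_scheme"
  shows "finite (S1_start_rhss A)"
  by (simp add: S1_start_rhss_def)

lemma S1_subset_UN_label_lang:
  "S1 A \<subseteq> (\<Union>r \<in> S1_start_rhss A. syms_lang (label_lang A (Inl \<circ> rep_state A)) r)"
    (is "_ \<subseteq> (\<Union>r \<in> _. ?L r)")
proof
  fix z assume "z \<in> S1 A"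
  then obtain y where "y \<in> WMR" "y \<noteq> []" and z: "z = sigma1 A y"
    by (auto simp: S1_def WM_eq_WMR)
  then show "z \<in> (\<Union>r \<in> S1_start_rhss A. ?L r)"
  proof cases
    case (WMR_Intl w a)
    then have "z \<in> ?L [Tm (Inr (state_fun A w \<circ> intl_fun A a)), NT (id, state_fun A w, False)]"
      by (auto simp: z sigma1_Intl intro!: suffix_labels_in_label_lang)
    then show ?thesis by (auto simp: S1_start_rhss_def)
  next
    case (WMR_Call x d a b)
    then have "z \<in> ?L [Tm (Inr (state_fun A d \<circ> nest_fun A a b (state_fun A x))),
        NT (state_fun A d \<circ> ret_bot A b, state_fun A x, False),
        Tm (Inl (rep_state A (state_fun A d (ret_bot A b (init A))))), NT (id, state_fun A d, False)]"
        (is "_ \<in> syms_lang _ ?r")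
      unfolding z \<open>y = Call a # x @ Ret b # d\<close> sigma1_Call[OF WMR_Call(2,3)]
      by (intro syms_lang_Cons_TmI syms_lang_Cons_NTI) (auto intro!: suffix_labels_in_label_lang)
    moreover have "?r \<in> S1_start_rhss A"
      unfolding S1_start_rhss_def
      by (rule UnI2, rule rev_image_eqI[of "(state_fun A d, a, b, state_fun A x)"]) simp_all
    ultimately show ?thesis by blast
  qed simp
qed

lemma UN_label_lang_subset_S1:
  "(\<Union>r \<in> S1_start_rhss A. syms_lang (label_lang A (Inl \<circ> rep_state A)) r) \<subseteq> S1 A"
    (is "(\<Union>r \<in> _. ?L r) \<subseteq> _")
proof
  fix z assume "z \<in> (\<Union>r \<in> S1_start_rhss A. ?L r)"
  then consider (intl) f a where "z \<in> ?L [Tm (Inr (f \<circ> intl_fun A a)), NT (id, f, False)]"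
    | (call) f a b e where "z \<in> ?L [Tm (Inr (f \<circ> nest_fun A a b e)), NT (f \<circ> ret_bot A b, e, False),
        Tm (Inl (rep_state A (f (ret_bot A b (init A))))), NT (id, f, False)]"
    by (auto simp: S1_start_rhss_def simp del: syms_lang.simps syms_lang_Cons_Tm)
  then obtain y where "y \<in> WMR" "y \<noteq> []" "z = sigma1 A y"
  proof cases
    case intl
    then obtain w where "w \<in> WMR" "state_fun A w = f"
      and "z = Inr (f \<circ> intl_fun A a) # suffix_labels A (Inl \<circ> rep_state A) id w"
      by auto
    then show ?thesis using that[of "Intl a # w"] by (simp add: sigma1_Intl WMR_Intl)
  next
    case call
    then obtain x d where "x \<in> WMR" "state_fun A x = e" "d \<in> WMR" "state_fun A d = f"
      and "z = Inr (f \<circ> nest_fun A a b e) #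
        suffix_labels A (Inl \<circ> rep_state A) (f \<circ> ret_bot A b) x @
        Inl (rep_state A (f (ret_bot A b (init A)))) # suffix_labels A (Inl \<circ> rep_state A) id d"
      by auto
    then show ?thesis
      using that[of "Call a # x @ Ret b # d"] by (simp add: sigma1_Call WMR_Call)
  qed
  then show "z \<in> S1 A" by (auto simp: S1_def WM_eq_WMR)
qed

lemma S1_eq_UN_label_lang:
  "S1 A = (\<Union>r \<in> S1_start_rhss A. syms_lang (label_lang A (Inl \<circ> rep_state A)) r)"
  by (rule subset_antisym[OF S1_subset_UN_label_lang UN_label_lang_subset_S1])

theorem lemma10:
  fixes A :: "('q::{finite,linorder}, 'g::{finite,linorder}, 'c::finite, 'r::finite, 'i::finite) vpa"
  shows "context_free (S0 A) \<and> context_free (S1 A)"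
proof
  show "context_free (S0 A)"
    unfolding S0_eq_UN_label_lang cfg_lang_label_prods[symmetric]
    by (rule context_free_UN_syms_lang) (simp_all add: finite_label_prods)
  show "context_free (S1 A)"
    unfolding S1_eq_UN_label_lang cfg_lang_label_prods[symmetric]
    by (rule context_free_UN_syms_lang) (simp_all add: finite_label_prods finite_S1_start_rhss)
qed

end
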